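(* Let $a,b,c,x,y,t\in\mathbb{C}$ with $|yt|<1$. Let $d,e,xt\in\mathbb{C}\setminus\{q^{-m}:m\ge0\}$. Then $$\sum_{n=0}^\infty\phi_n^{(a,b,c;d,e)}(x,y|q)\frac{(-1)^nq^{\binom n2}t^n}{(q;q)_n}=(xt;q)_\infty\sum_{N=0}^\infty\frac{(-1)^Nq^{\binom N2}(a,b,c;q)_N}{(q,d,e,xt;q)_N}(yt)^N.$$
   Context: Throughout, $0<q<1$. $(\alpha;q)_0=1$, $(\alpha;q)_n=\prod_{j=0}^{n-1}(1-\alpha q^j)$, $(\alpha;q)_\infty=\prod_{j\ge0}(1-\alpha q^j)$, and $(\alpha_1,\dots,\alpha_r;q)_n=\prod_i(\alpha_i;q)_n$. $\begin{bmatrix}n\\k\end{bmatrix}=\frac{(q;q)_n}{(q;q)_k(q;q)_{n-k}}$. $$\phi_n^{(a,b,c;d,e)}(x,y|q)=\sum_{k=0}^n\begin{bmatrix}n\\k\end{bmatrix}\frac{(a,b,c;q)_k}{(d,e;q)_k}x^{n-k}y^k.$$ *)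

theory Defs
  imports "HOL-Analysis.Analysis"
begin

definition qpoch :: "complex \<Rightarrow> real \<Rightarrow> nat \<Rightarrow> complex" where
  "qpoch \<alpha> q n = (\<Prod>j<n. 1 - \<alpha> * of_real q ^ j)"

definition qpoch_inf :: "complex \<Rightarrow> real \<Rightarrow> complex" where
  "qpoch_inf \<alpha> q = (\<Prod>j. 1 - \<alpha> * of_real q ^ j)"

definition qbinom :: "real \<Rightarrow> nat \<Rightarrow> nat \<Rightarrow> complex" where
  "qbinom q n k = qpoch (of_real q) q n / (qpoch (of_real q) q k * qpoch (of_real q) q (n - k))"

definition phi :: "complex \<Rightarrow> complex \<Rightarrow> complex \<Rightarrow> complex \<Rightarrow> complex \<Rightarrow> real
    \<Rightarrow> nat \<Rightarrow> complex \<Rightarrow> complex \<Rightarrow> complex" where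
  "phi a b c d e q n x y = (\<Sum>k\<le>n. qbinom q n k *
      (qpoch a q k * qpoch b q k * qpoch c q k) / (qpoch d q k * qpoch e q k) *
      x ^ (n - k) * y ^ k)"

end

theory Submission
  imports Defs
begin

text \<open>
  Euler's identity \<open>(z;q)\<^sub>\<infinity> = E(z) = \<Sum>\<^sub>m (-1)\<^sup>m q\<^bsup>m(m-1)/2\<^esup> z\<^sup>m / (q;q)\<^sub>m\<close> follows from the
  functional equation \<open>E(z) = (1 - z) E(qz)\<close>, iterated to \<open>E(z) = (z;q)\<^sub>n E(q\<^sup>n z)\<close>, and
  continuity of \<open>E\<close> at \<open>0\<close>. Expanding \<open>\<phi>\<^sub>n\<close> and writing
  \<open>n = k + m\<close>, the identity \<open>binom(k+m,2) = binom(k,2) + binom(m,2) + km\<close> splits the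
  left-hand side into a double series whose inner sum over \<open>m\<close> is Euler's series at
  \<open>q\<^sup>k x t\<close>, i.e. \<open>(xt;q)\<^sub>\<infinity> / (xt;q)\<^sub>k\<close>. The double series is dominated by the product
  of two absolutely convergent series, which justifies summing it by rows instead of
  by diagonals.
\<close>

lemma choose2_Suc: "Suc m choose 2 = (m choose 2) + m"
  by (simp add: numeral_2_eq_2)

lemma choose2_add: "(k + m) choose 2 = (k choose 2) + (m choose 2) + k * m"
  by (induction m) (simp_all add: choose2_Suc)

lemma qpoch_Suc: "qpoch a q (Suc n) = qpoch a q n * (1 - a * of_real q ^ n)"
  by (simp add: qpoch_def)

lemma qpoch_nonzero:
  assumes "\<And>j. j < n \<Longrightarrow> a * of_real q ^ j \<noteq> 1"
  shows "qpoch a q n \<noteq> 0"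
  using assms unfolding qpoch_def by (auto simp: prod_zero_iff)

lemma qpow_Suc_neq_1:
  assumes "0 < q" "q < 1"
  shows "(of_real q :: complex) * of_real q ^ j \<noteq> 1"
proof -
  have "q ^ Suc j < 1"
    using assms by (rule power_Suc_less_one)
  then have "of_real (q ^ Suc j) \<noteq> (1 :: complex)"
    by (metis less_irrefl of_real_eq_1_iff)
  then show ?thesis by simp
qed

lemma qpoch_q_nonzero:
  assumes "0 < q" "q < 1"
  shows "qpoch (of_real q) q n \<noteq> 0"
  using qpoch_nonzero qpow_Suc_neq_1[OF assms] by blast

lemma qpoch_nonzero_if_not_inverse_power:
  assumes "q \<noteq> 0" "\<forall>m::nat. d \<noteq> 1 / of_real q ^ m"
  shows "qpoch d q n \<noteq> 0"
proof (rule qpoch_nonzero)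
  fix j
  show "d * of_real q ^ j \<noteq> 1"
    using assms by (metis nonzero_eq_divide_eq of_real_eq_0_iff power_not_zero)
qed

lemma summable_norm_if_ratio_tendsto_0:
  fixes f :: "nat \<Rightarrow> 'a::real_normed_field"
  assumes rec: "\<And>n. f (Suc n) = f n * r n" and lim: "r \<longlonglongrightarrow> 0"
  shows "summable (\<lambda>n. norm (f n))"
proof -
  have "eventually (\<lambda>n. norm (r n) < 1/2) sequentially"
    using order_tendstoD(2)[OF tendsto_norm_zero[OF lim], of "1/2"] by simp
  then obtain N where N: "\<And>n. n \<ge> N \<Longrightarrow> norm (r n) < 1/2"
    by (auto simp: eventually_at_top_linorder)
  show ?thesis
  proof (rule summable_ratio_test[of "1/2" N])
    fix n assume "n \<ge> N"
    then have "norm (f n) * norm (r n) \<le> norm (f n) * (1/2)"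
      using N[of n] by (intro mult_left_mono) auto
    then show "norm (norm (f (Suc n))) \<le> 1/2 * norm (norm (f n))"
      by (simp add: rec norm_mult)
  qed simp
qed

lemma qpow_tendsto_0:
  assumes "0 < q" "q < 1"
  shows "(\<lambda>n. (of_real q :: complex) ^ n) \<longlonglongrightarrow> 0"
  using assms by (intro LIMSEQ_power_zero) simp

lemma qpoch_tendsto_qpoch_inf:
  assumes "0 < q" "q < 1"
  shows "(\<lambda>n. qpoch z q n) \<longlonglongrightarrow> qpoch_inf z q"
proof -
  let ?f = "\<lambda>j. 1 - z * of_real q ^ j"
  have "summable (\<lambda>j. norm z * q ^ j)"
    using assms by (intro summable_mult summable_geometric) auto
  then have "summable (\<lambda>j. norm (?f j - 1))"
    using assms by (simp add: norm_mult norm_power)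
  then have "convergent_prod ?f"
    by (intro abs_convergent_prod_imp_convergent_prod summable_imp_abs_convergent_prod)
  then have "(\<lambda>n. \<Prod>j\<le>n. ?f j) \<longlonglongrightarrow> qpoch_inf z q"
    unfolding qpoch_inf_def by (rule convergent_prod_LIMSEQ)
  then have "(\<lambda>n. qpoch z q (Suc n)) \<longlonglongrightarrow> qpoch_inf z q"
    by (simp add: qpoch_def lessThan_Suc_atMost)
  then show ?thesis by (rule LIMSEQ_imp_Suc)
qed

definition euler_coeff :: "real \<Rightarrow> nat \<Rightarrow> complex" where
  "euler_coeff q m = (-1) ^ m * of_real q ^ (m choose 2) / qpoch (of_real q) q m"

definition euler_E :: "real \<Rightarrow> complex \<Rightarrow> complex" where
  "euler_E q z = (\<Sum>m. euler_coeff q m * z ^ m)"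

lemma euler_coeff_Suc:
  "euler_coeff q (Suc m) = euler_coeff q m * (- (of_real q ^ m) / (1 - of_real q * of_real q ^ m))"
  by (simp add: euler_coeff_def choose2_Suc qpoch_Suc power_add field_split_simps)

lemma summable_norm_euler_terms:
  assumes "0 < q" "q < 1"
  shows "summable (\<lambda>m. norm (euler_coeff q m * z ^ m))"
proof (rule summable_norm_if_ratio_tendsto_0)
  show "euler_coeff q (Suc m) * z ^ Suc m
      = euler_coeff q m * z ^ m * (- (of_real q ^ m) * z / (1 - of_real q * of_real q ^ m))" for m
    by (simp add: euler_coeff_Suc)
  have "(\<lambda>m. - (of_real q ^ m) * z / (1 - of_real q * of_real q ^ m))
      \<longlonglongrightarrow> - 0 * z / (1 - of_real q * 0)"
    by (intro tendsto_intros qpow_tendsto_0 assms) simp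
  then show "(\<lambda>m. - (of_real q ^ m) * z / (1 - of_real q * of_real q ^ m)) \<longlonglongrightarrow> 0"
    by simp
qed

lemma euler_E_sums:
  assumes "0 < q" "q < 1"
  shows "(\<lambda>m. euler_coeff q m * z ^ m) sums euler_E q z"
  unfolding euler_E_def
  using summable_norm_cancel[OF summable_norm_euler_terms[OF assms]] by (rule summable_sums)

lemma euler_E_functional_eq:
  assumes "0 < q" "q < 1"
  shows "euler_E q z = (1 - z) * euler_E q (of_real q * z)"
proof -
  let ?d = "\<lambda>m. euler_coeff q m * z ^ m - euler_coeff q m * (of_real q * z) ^ m"
  have d_Suc: "?d (Suc m) = - z * (euler_coeff q m * (of_real q * z) ^ m)" for m
  proof -
    have "?d (Suc m) = euler_coeff q (Suc m) * z ^ Suc m * (1 - of_real q * of_real q ^ m)"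
      by (simp add: power_mult_distrib algebra_simps)
    also have "\<dots> = - z * (euler_coeff q m * z ^ m * of_real q ^ m)"
      using qpow_Suc_neq_1[OF assms, of m] by (simp add: euler_coeff_Suc)
    finally show ?thesis by (simp add: power_mult_distrib mult_ac)
  qed
  have "?d sums (euler_E q z - euler_E q (of_real q * z))"
    by (intro sums_diff euler_E_sums assms)
  then have "(\<lambda>m. ?d (Suc m)) sums (euler_E q z - euler_E q (of_real q * z))"
    using sums_Suc_iff[of ?d] by simp
  moreover have "(\<lambda>m. ?d (Suc m)) sums (- z * euler_E q (of_real q * z))"
    unfolding d_Suc by (intro sums_mult euler_E_sums assms)
  ultimately have "euler_E q z - euler_E q (of_real q * z) = - z * euler_E q (of_real q * z)"
    by (rule sums_unique2)
  then show ?thesis by (simp add: algebra_simps)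
qed

lemma euler_E_eq_qpoch_mult:
  assumes "0 < q" "q < 1"
  shows "euler_E q z = qpoch z q n * euler_E q (of_real q ^ n * z)"
proof (induction n)
  case 0
  then show ?case by (simp add: qpoch_def)
next
  case (Suc n)
  also have "euler_E q (of_real q ^ n * z)
      = (1 - z * of_real q ^ n) * euler_E q (of_real q ^ Suc n * z)"
    by (subst euler_E_functional_eq[OF assms]) (simp add: mult_ac)
  finally show ?case by (simp add: qpoch_Suc)
qed

lemma euler_E_0: "euler_E q 0 = 1"
  unfolding euler_E_def powser_zero by (simp add: euler_coeff_def qpoch_def numeral_2_eq_2)

lemma isCont_euler_E:
  assumes "0 < q" "q < 1"
  shows "isCont (euler_E q) w"
  unfolding euler_E_def
  using summable_norm_cancel[OF summable_norm_euler_terms[OF assms]]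
  by (intro isCont_powser_converges_everywhere)

lemma qpoch_tendsto_euler_E:
  assumes "0 < q" "q < 1"
  shows "(\<lambda>n. qpoch z q n) \<longlonglongrightarrow> euler_E q z"
proof -
  have "(\<lambda>n. of_real q ^ n * z) \<longlonglongrightarrow> 0"
    using tendsto_mult_right[OF qpow_tendsto_0[OF assms], of z] by simp
  then have "(\<lambda>n. euler_E q (of_real q ^ n * z)) \<longlonglongrightarrow> euler_E q 0"
    by (rule isCont_tendsto_compose[OF isCont_euler_E[OF assms]])
  then have tail: "(\<lambda>n. euler_E q (of_real q ^ n * z)) \<longlonglongrightarrow> 1"
    by (simp add: euler_E_0)
  then have "(\<lambda>n. euler_E q z / euler_E q (of_real q ^ n * z)) \<longlonglongrightarrow> euler_E q z / 1"
    by (intro tendsto_intros) simp_all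
  moreover have "eventually (\<lambda>n. euler_E q (of_real q ^ n * z) \<noteq> 0) sequentially"
    using tendsto_imp_eventually_ne[OF tail, of 0] by simp
  then have "eventually (\<lambda>n. euler_E q z / euler_E q (of_real q ^ n * z) = qpoch z q n) sequentially"
    by eventually_elim (metis euler_E_eq_qpoch_mult[OF assms] nonzero_mult_div_cancel_right)
  ultimately show ?thesis
    by (simp add: Lim_transform_eventually)
qed

lemma qpoch_inf_eq_euler_E:
  assumes "0 < q" "q < 1"
  shows "qpoch_inf z q = euler_E q z"
  using qpoch_tendsto_qpoch_inf[OF assms] qpoch_tendsto_euler_E[OF assms] by (rule LIMSEQ_unique)

lemma euler_sums_qpoch_inf:
  assumes "0 < q" "q < 1"
  shows "(\<lambda>m. euler_coeff q m * z ^ m) sums qpoch_inf z q"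
  using euler_E_sums[OF assms] by (simp add: qpoch_inf_eq_euler_E[OF assms])

lemma qpoch_inf_eq_qpoch_mult:
  assumes "0 < q" "q < 1"
  shows "qpoch_inf z q = qpoch z q n * qpoch_inf (of_real q ^ n * z) q"
  using euler_E_eq_qpoch_mult[OF assms] by (simp add: qpoch_inf_eq_euler_E[OF assms])

lemma euler_shifted_sums:
  assumes "0 < q" "q < 1" "qpoch z q k \<noteq> 0"
  shows "(\<lambda>m. euler_coeff q m * (of_real q ^ k * z) ^ m) sums (qpoch_inf z q / qpoch z q k)"
  using euler_sums_qpoch_inf[OF assms(1,2)] qpoch_inf_eq_qpoch_mult[OF assms(1,2), of z k] assms(3)
  by simp

lemma norm_euler_shifted_le:
  assumes "0 < q" "q < 1"
  shows "norm (euler_coeff q m * (of_real q ^ k * z) ^ m) \<le> norm (euler_coeff q m * z ^ m)"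
proof -
  have "(q ^ k) ^ m * norm z ^ m \<le> norm z ^ m"
    using assms by (simp add: power_le_one mult_left_le_one_le)
  then show ?thesis
    using assms by (simp add: norm_mult norm_power power_mult_distrib mult_left_mono)
qed

lemma suminf_mult_if_summable_mult:
  fixes c :: "'a::{real_normed_field, banach}"
  assumes "summable (\<lambda>n. c * f n)"
  shows "(\<Sum>n. c * f n) = c * suminf f"
proof (cases "c = 0")
  case False
  then show ?thesis using assms by (simp add: summable_cmult_iff suminf_mult)
qed simp

lemma diagonal_sums_if_dominated:
  fixes F :: "nat \<Rightarrow> nat \<Rightarrow> complex" and u v :: "nat \<Rightarrow> real"
  assumes u: "summable u" "\<And>k. 0 \<le> u k" and v: "summable v"
    and dominated: "\<And>k m. norm (F k m) \<le> u k * v m"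
    and rows: "\<And>k. (\<lambda>m. F k m) sums r k"
  shows "summable r" and "(\<lambda>n. \<Sum>k\<le>n. F k (n - k)) sums suminf r"
proof -
  let ?F = "\<lambda>p. F (fst p) (snd p)"
  have row_norms: "summable (\<lambda>m. norm (F k m))" for k
    by (rule summable_comparison_test'[OF summable_mult[OF v, of "u k"]]) (simp add: dominated)
  have row_norms_le: "(\<Sum>m. norm (F k m)) \<le> u k * suminf v" for k
    using suminf_le[OF _ row_norms summable_mult[OF v]] dominated suminf_mult[OF v] by simp
  have "(\<lambda>p. norm (?F p)) summable_on Sigma UNIV (\<lambda>_. UNIV)"
  proof (rule Infinite_Sum.abs_summable_on_Sigma_iff[THEN iffD2], intro conjI ballI)
    show "(\<lambda>m. norm (?F (k, m))) summable_on UNIV" for k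
      using norm_summable_imp_summable_on[of "\<lambda>m. norm (F k m)"] row_norms by simp
    have bound: "(\<lambda>k. norm (u k * suminf v)) summable_on UNIV"
      using summable_mult2[OF u(1)] u(2) by (intro norm_summable_imp_summable_on) (simp add: abs_mult)
    have "infsum (\<lambda>m. norm (?F (k, m))) UNIV = (\<Sum>m. norm (F k m))" for k
      by (intro infsumI norm_summable_imp_has_sum) (simp_all add: row_norms summable_sums)
    then show "(\<lambda>k. norm (infsum (\<lambda>m. norm (?F (k, m))) UNIV)) summable_on UNIV"
      using row_norms_le suminf_nonneg[OF row_norms]
      by (intro Infinite_Sum.abs_summable_on_comparison_test'[OF bound]) (simp add: order_trans[OF _ abs_ge_self])
  qed
  then have "?F summable_on UNIV"
    by (simp add: abs_summable_summable)
  then obtain S where S: "(?F has_sum S) UNIV"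
    unfolding summable_on_def by blast
  have "(r has_sum S) UNIV"
    by (rule has_sum_Sigma'[where f = ?F and A = UNIV and B = "\<lambda>_. UNIV"])
      (use S norm_summable_imp_has_sum[OF row_norms rows] in simp_all)
  then have "r sums S"
    by (rule has_sum_imp_sums)
  then show "summable r" using sums_summable by blast
  have "bij_betw (\<lambda>p. (snd p, fst p - snd p)) (Sigma UNIV atMost) (UNIV :: (nat \<times> nat) set)"
    by (rule bij_betwI[where g = "\<lambda>p. (fst p + snd p, fst p)"]) auto
  then have "((\<lambda>p. F (snd p) (fst p - snd p)) has_sum S) (Sigma UNIV atMost)"
    using has_sum_reindex_bij_betw[OF \<open>bij_betw _ _ _\<close>, of ?F S] S by simp
  then have "((\<lambda>n. \<Sum>k\<le>n. F k (n - k)) has_sum S) UNIV"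
    by (rule has_sum_Sigma'[where B = atMost]) (auto intro: has_sum_finite)
  then show "(\<lambda>n. \<Sum>k\<le>n. F k (n - k)) sums suminf r"
    using \<open>r sums S\<close> by (simp add: has_sum_imp_sums sums_unique[symmetric])
qed

text \<open>The \<open>N\<close>-th term of the right-hand series, without its factor \<open>1 / (xt;q)\<^sub>N\<close>.\<close>

definition hyper_term :: "complex \<Rightarrow> complex \<Rightarrow> complex \<Rightarrow> complex \<Rightarrow> complex \<Rightarrow> real
    \<Rightarrow> complex \<Rightarrow> nat \<Rightarrow> complex" where
  "hyper_term a b c d e q z k = (-1) ^ k * of_real q ^ (k choose 2)
      * (qpoch a q k * qpoch b q k * qpoch c q k)
      / (qpoch (of_real q) q k * qpoch d q k * qpoch e q k) * z ^ k"

lemma summable_norm_hyper_term: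
  assumes q: "0 < q" "q < 1"
  shows "summable (\<lambda>k. norm (hyper_term a b c d e q z k))"
proof (rule summable_norm_if_ratio_tendsto_0)
  let ?p = "\<lambda>\<alpha> k. 1 - \<alpha> * (of_real q :: complex) ^ k"
  let ?r = "\<lambda>k. - (of_real q ^ k) * (?p a k * ?p b k * ?p c k)
      / (?p (of_real q) k * ?p d k * ?p e k) * z"
  show "hyper_term a b c d e q z (Suc k) = hyper_term a b c d e q z k * ?r k" for k
    using qpoch_q_nonzero[OF q] qpow_Suc_neq_1[OF q]
    by (simp add: hyper_term_def qpoch_Suc choose2_Suc power_add field_simps)
  have p_lim: "(\<lambda>k. ?p \<alpha> k) \<longlonglongrightarrow> 1" for \<alpha>
    using tendsto_diff[OF tendsto_const tendsto_mult_left[OF qpow_tendsto_0[OF q]], of 1 \<alpha>] by simp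
  have "?r \<longlonglongrightarrow> - 0 * (1 * 1 * 1) / (1 * 1 * 1) * z"
    by (intro tendsto_intros qpow_tendsto_0 q p_lim) simp
  then show "?r \<longlonglongrightarrow> 0"
    by simp
qed

lemma phi_term_eq_diagonal_sum:
  assumes "0 < q" "q < 1"
  shows "phi a b c d e q n x y * (-1) ^ n * of_real q ^ (n choose 2) * t ^ n / qpoch (of_real q) q n
    = (\<Sum>k\<le>n. hyper_term a b c d e q (y * t) k
         * (euler_coeff q (n - k) * (of_real q ^ k * (x * t)) ^ (n - k)))"
  unfolding phi_def sum_distrib_right sum_divide_distrib
proof (rule sum.cong[OF refl])
  fix k assume "k \<in> {..n}"
  then obtain m where n: "n = k + m"
    using le_Suc_ex by auto
  have "qpoch (of_real q) q n \<noteq> 0"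
    using qpoch_q_nonzero[OF assms] .
  then show "qbinom q n k * (qpoch a q k * qpoch b q k * qpoch c q k) / (qpoch d q k * qpoch e q k)
      * x ^ (n - k) * y ^ k * (-1) ^ n * of_real q ^ (n choose 2) * t ^ n / qpoch (of_real q) q n
    = hyper_term a b c d e q (y * t) k * (euler_coeff q (n - k) * (of_real q ^ k * (x * t)) ^ (n - k))"
    unfolding n qbinom_def hyper_term_def euler_coeff_def
    by (simp add: choose2_add power_add power_mult_distrib power_mult divide_inverse inverse_mult_distrib mult_ac)
qed

theorem corollary1:
  fixes a b c d e x y t :: complex and q :: real
  assumes "0 < q" "q < 1"
    and "norm (y * t) < 1"
    and "\<forall>m::nat. d \<noteq> 1 / of_real q ^ m"
    and "\<forall>m::nat. e \<noteq> 1 / of_real q ^ m"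
    and "\<forall>m::nat. x * t \<noteq> 1 / of_real q ^ m"
  shows "(\<lambda>n. phi a b c d e q n x y * (-1) ^ n * of_real q ^ (n choose 2) * t ^ n
              / qpoch (of_real q) q n)
         sums (qpoch_inf (x * t) q *
           (\<Sum>N. (-1) ^ N * of_real q ^ (N choose 2) * (qpoch a q N * qpoch b q N * qpoch c q N)
              / (qpoch (of_real q) q N * qpoch d q N * qpoch e q N * qpoch (x * t) q N)
              * (y * t) ^ N))"
proof -
  note q = assms(1,2)
  have "q \<noteq> 0" using q by simp
  let ?u = "hyper_term a b c d e q (y * t)"
  define R where "R N = ?u N / qpoch (x * t) q N" for N
  define F where "F k m = ?u k * (euler_coeff q m * (of_real q ^ k * (x * t)) ^ m)" for k m
  have rows: "(\<lambda>m. F k m) sums (qpoch_inf (x * t) q * R k)" for k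
    using sums_mult[OF euler_shifted_sums[OF q qpoch_nonzero_if_not_inverse_power[OF \<open>q \<noteq> 0\<close> assms(6)]],
        of "?u k" k]
    by (simp add: F_def R_def mult.commute)
  have dominated: "norm (F k m) \<le> norm (?u k) * norm (euler_coeff q m * (x * t) ^ m)" for k m
    unfolding F_def norm_mult[of "?u k"] by (intro mult_left_mono norm_euler_shifted_le q) simp
  note diagonal = diagonal_sums_if_dominated[OF summable_norm_hyper_term[OF q] norm_ge_zero
      summable_norm_euler_terms[OF q] dominated rows]
  have "(\<lambda>n. \<Sum>k\<le>n. F k (n - k)) sums (qpoch_inf (x * t) q * suminf R)"
    using diagonal(2) by (simp add: suminf_mult_if_summable_mult[OF diagonal(1)])
  moreover have "R = (\<lambda>N. (-1) ^ N * of_real q ^ (N choose 2) * (qpoch a q N * qpoch b q N * qpoch c q N)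
      / (qpoch (of_real q) q N * qpoch d q N * qpoch e q N * qpoch (x * t) q N) * (y * t) ^ N)"
    by (simp add: fun_eq_iff R_def hyper_term_def)
  ultimately show ?thesis
    by (simp add: F_def phi_term_eq_diagonal_sum[OF q])
qed

end
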